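(* Let $G$ be a connected, finite, pointed, edge-ordered graph with distinguished vertex $v_0$, and let $T=(F\circ I'\circ\Theta)(G)$. Then the neighborhood ordering $\triangleleft$ of the distinguished point $v_0$ in $T$ is the lexicographic depth-first traversal of $G$: for vertices $u,v$ of $G$ with $v_0\to u$ and $v_0\to v$ in $T$, $v_0\to u\triangleleft v_0\to v$ in $T$ iff $u$ precedes $v$ in the lexicographic depth-first traversal of $G$ (and these targets are the vertices other than $v_0$, which comes first in the traversal).
   Context: A (directed) graph is $(V,\to)$ with $\to\subseteq V\times V$; $N(u)$ is the set of outgoing edges of $u$. A pointed graph has a distinguished vertex $v_0$; connected means every vertex is reachable by a path from $v_0$. A path is a finite sequence $v_1\to\cdots\to v_n$ of vertices joined by edges; proper if no vertex repeats; co-initial paths share their source; $\pi\sqsubset\sigma$ means $\pi$ is a proper prefix of $\sigma$. A finite edge-ordered graph is a finite graph with a strict linear order $\triangleleft$ on each neighborhood. Lexicographic path order: if $\pi\sqsubset\sigma$ then $\pi\prec\sigma$ (symmetrically); otherwise, with $\zeta$ the longest common prefix, $u$ its target and $v_1,v_2$ the next vertices, $\pi\prec\sigma$ iff $u\to v_1\triangleleft u\to v_2$. $\min(u\rightsquigarrow v)$ is the $\prec$-least proper path from $u$ to $v$. Lexicographic depth-first search on $G$: initialize a list $L=()$ and a stack $S=(v_0)$; while $S$ is nonempty, pop the top element $v$; if $v\in L$, continue; otherwise append $v$ to $L$ and push the vertices of $\partial v$ (neighbors of $v$ not in $L$) onto $S$ in reverse $\triangleleft$-order (so the $\triangleleft$-least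 ends on top). The lexicographic depth-first traversal is the order in which vertices are appended to $L$. Lex-homomorphisms, lex-graphs: a lex-homomorphism $h$ is a vertex map preserving edges, mapping exactly the distinguished vertex to the distinguished vertex, monotone on neighborhoods, and with $h(\min(u\rightsquigarrow v))=\min(h(u)\rightsquigarrow h(v))$; a lex-graph is a finite, pointed, connected, edge-ordered graph with $u\to v_1\triangleleft u\to v_2$ iff $\min(u\rightsquigarrow v_1)\prec\min(u\rightsquigarrow v_2)$. An arborescence is a pointed graph with a unique path $v_0\rightsquigarrow u$ for every $u$. Functors: $\Theta$ sends $G$ to the edge-ordered arborescence on the vertices of $G$ with the same distinguished vertex, containing $u\to v$ iff it is an edge of $\min(v_0\rightsquigarrow v)$ in $G$, with edge order inherited from $G$; $I'$ regards an edge-ordered arborescence as a lex-graph; $F$ sends a lex-graph $H$ to the graph on the same vertices and distinguished point with edge relation the transitive closure of that of $H$ and $u\to v_1\triangleleft u\to v_2$ iff $\min(u\rightsquigarrow v_1)\prec\min(u\rightsquigarrow v_2)$ in $H$. *)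

theory Defs
  imports Main
begin

text \<open>An edge order is ord :: 'a \<Rightarrow> 'a \<Rightarrow> 'a \<Rightarrow> bool, where ord u v1 v2 means
  (u \<rightarrow> v1) \<triangleleft> (u \<rightarrow> v2).\<close>

definition is_path :: "('a \<Rightarrow> 'a \<Rightarrow> bool) \<Rightarrow> 'a list \<Rightarrow> bool" where
  "is_path E p \<longleftrightarrow> p \<noteq> [] \<and> (\<forall>i. Suc i < length p \<longrightarrow> E (p ! i) (p ! Suc i))"

definition proper_path :: "('a \<Rightarrow> 'a \<Rightarrow> bool) \<Rightarrow> 'a \<Rightarrow> 'a \<Rightarrow> 'a list \<Rightarrow> bool" where
  "proper_path E u v p \<longleftrightarrow> is_path E p \<and> distinct p \<and> hd p = u \<and> last p = v"

definition lex_less :: "('a \<Rightarrow> 'a \<Rightarrow> 'a \<Rightarrow> bool) \<Rightarrow> 'a list \<Rightarrow> 'a list \<Rightarrow> bool" where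
  "lex_less ord p q \<longleftrightarrow>
     (\<exists>r. r \<noteq> [] \<and> q = p @ r) \<or>
     (\<exists>z v1 v2 r1 r2. p = z @ v1 # r1 \<and> q = z @ v2 # r2 \<and> z \<noteq> [] \<and> v1 \<noteq> v2
        \<and> ord (last z) v1 v2)"

definition min_path :: "('a \<Rightarrow> 'a \<Rightarrow> bool) \<Rightarrow> ('a \<Rightarrow> 'a \<Rightarrow> 'a \<Rightarrow> bool) \<Rightarrow> 'a \<Rightarrow> 'a \<Rightarrow> 'a list" where
  "min_path E ord u v = (SOME p. proper_path E u v p \<and>
      (\<forall>q. proper_path E u v q \<longrightarrow> q \<noteq> p \<longrightarrow> lex_less ord p q))"

definition edge_ordered :: "'a set \<Rightarrow> ('a \<Rightarrow> 'a \<Rightarrow> bool) \<Rightarrow> ('a \<Rightarrow> 'a \<Rightarrow> 'a \<Rightarrow> bool) \<Rightarrow> bool" where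
  "edge_ordered V E ord \<longleftrightarrow>
     finite V \<and> (\<forall>u v. E u v \<longrightarrow> u \<in> V \<and> v \<in> V) \<and>
     (\<forall>u a b. ord u a b \<longrightarrow> E u a \<and> E u b) \<and>
     (\<forall>u a. \<not> ord u a a) \<and>
     (\<forall>u a b c. ord u a b \<longrightarrow> ord u b c \<longrightarrow> ord u a c) \<and>
     (\<forall>u a b. E u a \<longrightarrow> E u b \<longrightarrow> a \<noteq> b \<longrightarrow> ord u a b \<or> ord u b a)"

definition connected_from :: "'a set \<Rightarrow> ('a \<Rightarrow> 'a \<Rightarrow> bool) \<Rightarrow> 'a \<Rightarrow> bool" where
  "connected_from V E v0 \<longleftrightarrow> v0 \<in> V \<and> (\<forall>v\<in>V. E\<^sup>*\<^sup>* v0 v)"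

text \<open>Lexicographic depth-first search: dfs_run E ord L S L' means that running the
  loop from list L and stack S (head = top) ends with list L'.\<close>
definition sorted_nbrs :: "('a \<Rightarrow> 'a \<Rightarrow> bool) \<Rightarrow> ('a \<Rightarrow> 'a \<Rightarrow> 'a \<Rightarrow> bool) \<Rightarrow> 'a \<Rightarrow> 'a list \<Rightarrow> 'a list" where
  "sorted_nbrs E ord v L = (SOME xs. set xs = {w. E v w \<and> w \<notin> set L} \<and> distinct xs
      \<and> sorted_wrt (ord v) xs)"

inductive dfs_run :: "('a \<Rightarrow> 'a \<Rightarrow> bool) \<Rightarrow> ('a \<Rightarrow> 'a \<Rightarrow> 'a \<Rightarrow> bool) \<Rightarrow> 'a list \<Rightarrow> 'a list \<Rightarrow> 'a list \<Rightarrow> bool"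
  for E ord where
  stop: "dfs_run E ord L [] L"
| skip: "v \<in> set L \<Longrightarrow> dfs_run E ord L S L' \<Longrightarrow> dfs_run E ord L (v # S) L'"
| visit: "v \<notin> set L \<Longrightarrow> dfs_run E ord (L @ [v]) (sorted_nbrs E ord v (L @ [v]) @ S) L'
           \<Longrightarrow> dfs_run E ord L (v # S) L'"

definition dfs_traversal :: "('a \<Rightarrow> 'a \<Rightarrow> bool) \<Rightarrow> ('a \<Rightarrow> 'a \<Rightarrow> 'a \<Rightarrow> bool) \<Rightarrow> 'a \<Rightarrow> 'a list" where
  "dfs_traversal E ord v0 = (THE L. dfs_run E ord [] [v0] L)"

definition precedes :: "'a list \<Rightarrow> 'a \<Rightarrow> 'a \<Rightarrow> bool" where
  "precedes L u v \<longleftrightarrow> (\<exists>i j. i < j \<and> j < length L \<and> L ! i = u \<and> L ! j = v)"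

text \<open>Theta: the arborescence of lexicographically least paths from v0.\<close>
definition Theta_E :: "'a set \<Rightarrow> ('a \<Rightarrow> 'a \<Rightarrow> bool) \<Rightarrow> ('a \<Rightarrow> 'a \<Rightarrow> 'a \<Rightarrow> bool) \<Rightarrow> 'a \<Rightarrow> 'a \<Rightarrow> 'a \<Rightarrow> bool" where
  "Theta_E V E ord v0 u v \<longleftrightarrow> u \<in> V \<and> v \<in> V \<and>
     (let p = min_path E ord v0 v in \<exists>i. Suc i < length p \<and> p ! i = u \<and> p ! Suc i = v)"

definition Theta_ord :: "'a set \<Rightarrow> ('a \<Rightarrow> 'a \<Rightarrow> bool) \<Rightarrow> ('a \<Rightarrow> 'a \<Rightarrow> 'a \<Rightarrow> bool) \<Rightarrow> 'a \<Rightarrow> 'a \<Rightarrow> 'a \<Rightarrow> 'a \<Rightarrow> bool" where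
  "Theta_ord V E ord v0 u v1 v2 \<longleftrightarrow> Theta_E V E ord v0 u v1 \<and> Theta_E V E ord v0 u v2 \<and> ord u v1 v2"

text \<open>F: transitive closure, with edges ordered by least paths in H. (I' is the identity.)\<close>
definition F_E :: "('a \<Rightarrow> 'a \<Rightarrow> bool) \<Rightarrow> 'a \<Rightarrow> 'a \<Rightarrow> bool" where
  "F_E H = H\<^sup>+\<^sup>+"

definition F_ord :: "('a \<Rightarrow> 'a \<Rightarrow> bool) \<Rightarrow> ('a \<Rightarrow> 'a \<Rightarrow> 'a \<Rightarrow> bool) \<Rightarrow> 'a \<Rightarrow> 'a \<Rightarrow> 'a \<Rightarrow> bool" where
  "F_ord H Hord u v1 v2 \<longleftrightarrow> H\<^sup>+\<^sup>+ u v1 \<and> H\<^sup>+\<^sup>+ u v2 \<and>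
     lex_less Hord (min_path H Hord u v1) (min_path H Hord u v2)"

end

theory Submission
  imports Defs "HOL-Library.Sublist"
begin

text \<open>Write \<open>lp v\<close> for the lexicographically least proper path from \<open>v\<^sub>0\<close> to \<open>v\<close>.
  Least paths are closed under prefixes: if a prefix \<open>t\<close> of \<open>lp v\<close> were not least, a smaller
  path to the end of \<open>t\<close>, continued along the rest of \<open>lp v\<close> and short-cut at its first vertex
  on that rest, would be a proper path to \<open>v\<close> below \<open>lp v\<close>. Hence \<open>\<Theta>(G)\<close> is the tree whose
  root paths are exactly the least paths: its transitive closure joins \<open>v\<^sub>0\<close> to every other
  vertex, and \<open>F\<close> orders the neighbours \<open>u\<close>, \<open>v\<close> of \<open>v\<^sub>0\<close> by comparing \<open>lp u\<close> with \<open>lp v\<close>.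

  The depth-first search visits the vertices in increasing order of \<open>lp\<close>. Throughout the run
  the visited vertices form an initial segment of this order, the stack, read as the paths
  \<open>lp a @ [b]\<close> along which its entries \<open>b\<close> were pushed from visited vertices \<open>a\<close>, is
  lexicographically sorted, and every tree edge leaving the visited set is on the stack. So the
  next unvisited vertex popped is the least unvisited one, and it is reached along its least
  path.\<close>

section \<open>Paths\<close>

lemma is_path_iff_successively: "is_path E p \<longleftrightarrow> p \<noteq> [] \<and> successively E p"
  by (simp add: is_path_def successively_conv_nth)

lemma is_path_appendD:
  "is_path E (xs @ ys) \<Longrightarrow> xs \<noteq> [] \<Longrightarrow> is_path E xs"
  "is_path E (xs @ ys) \<Longrightarrow> ys \<noteq> [] \<Longrightarrow> is_path E ys"
  by (simp_all add: is_path_iff_successively successively_append_iff)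

lemma is_path_last_edge: "is_path G (z @ a # s) \<Longrightarrow> z \<noteq> [] \<Longrightarrow> G (last z) a"
  by (simp add: is_path_iff_successively successively_append_iff)

lemma is_path_vertex: "is_path E p \<Longrightarrow> x \<in> set p \<Longrightarrow> x = hd p \<or> (\<exists>y. E y x)"
proof -
  assume "is_path E p" "x \<in> set p"
  then obtain k where "k < length p" "p ! k = x"
    by (auto simp: in_set_conv_nth)
  with \<open>is_path E p\<close> show ?thesis
    unfolding is_path_def by (cases k) (auto simp: hd_conv_nth)
qed

lemma successively_imp_tranclp:
  "successively R (x # xs) \<Longrightarrow> xs \<noteq> [] \<Longrightarrow> R\<^sup>+\<^sup>+ x (last xs)"
proof (induction xs arbitrary: x)
  case (Cons y ys)
  then show ?case
    by (cases "ys = []") (auto simp: successively_Cons intro: tranclp_into_tranclp2)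
qed simp

lemma split_list_nth_Suc: "Suc i < length xs \<Longrightarrow> \<exists>ys zs. xs = ys @ xs ! i # xs ! Suc i # zs"
  by (metis Cons_nth_drop_Suc Suc_lessD append_take_drop_id)

lemma distinct_hd_eq_last: "distinct p \<Longrightarrow> p \<noteq> [] \<Longrightarrow> hd p = last p \<Longrightarrow> p = [hd p]"
  by (cases p) (auto dest: last_in_set split: if_splits)

text \<open>Follow \<open>q\<close> up to its first vertex on \<open>r\<close>, then continue along \<open>r\<close> from that vertex
  (along all of \<open>r\<close> if \<open>q\<close> avoids it).\<close>

lemma path_shortcut:
  assumes path: "is_path E (q @ r)" and "distinct q" and "distinct r" and "r \<noteq> []"
  shows "\<exists>u w. r = u @ w \<and> w \<noteq> [] \<and> hd w = hd (dropWhile (\<lambda>x. x \<notin> set r) q @ r) \<and>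
    is_path E (takeWhile (\<lambda>x. x \<notin> set r) q @ w) \<and> distinct (takeWhile (\<lambda>x. x \<notin> set r) q @ w)"
proof -
  define q1 q2 where "q1 = takeWhile (\<lambda>x. x \<notin> set r) q" and "q2 = dropWhile (\<lambda>x. x \<notin> set r) q"
  have q: "q = q1 @ q2"
    unfolding q1_def q2_def by simp
  have disjoint: "set q1 \<inter> set r = {}"
    unfolding q1_def by (auto dest: set_takeWhileD)
  have "distinct q1"
    using \<open>distinct q\<close> q by (metis distinct_append)
  show ?thesis
  proof (cases q2)
    case Nil
    then show ?thesis
      using assms disjoint \<open>distinct q1\<close> q unfolding q1_def[symmetric] q2_def[symmetric]
      by (intro exI[of _ "[]"] exI[of _ r]) auto
  next
    case (Cons c q3)
    then have "c \<in> set r"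
      using hd_dropWhile[of "\<lambda>x. x \<notin> set r" q] unfolding q2_def by simp
    then obtain u w where r: "r = u @ c # w"
      by (meson split_list)
    have "successively E (q1 @ c # q3 @ u @ c # w)"
      using path q Cons r by (simp add: is_path_iff_successively)
    then have "successively E (q1 @ c # w)"
      by (auto simp: successively_append_iff successively_Cons)
    moreover have "distinct (q1 @ c # w)"
      using \<open>distinct q1\<close> \<open>distinct r\<close> disjoint r by auto
    ultimately show ?thesis
      using r Cons unfolding q1_def[symmetric] q2_def[symmetric]
      by (intro exI[of _ u] exI[of _ "c # w"]) (simp add: is_path_iff_successively)
  qed
qed

section \<open>Lexicographic order of paths\<close>

lemma lex_less_Nil_left [simp]: "lex_less ord [] q \<longleftrightarrow> q \<noteq> []"
  by (auto simp: lex_less_def)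

lemma not_lex_less_Nil [simp]: "\<not> lex_less ord p []"
  by (auto simp: lex_less_def)

lemma lex_less_irrefl [simp]: "\<not> lex_less ord p p"
  by (auto simp: lex_less_def)

lemma lex_less_append [simp]: "r \<noteq> [] \<Longrightarrow> lex_less ord p (p @ r)"
  by (auto simp: lex_less_def)

lemma prefix_imp_lex_less: "prefix p q \<Longrightarrow> p \<noteq> q \<Longrightarrow> lex_less ord p q"
  unfolding prefix_def by (metis append_Nil2 lex_less_append)

lemma lex_less_divergeI:
  "z \<noteq> [] \<Longrightarrow> a \<noteq> b \<Longrightarrow> ord (last z) a b \<Longrightarrow> lex_less ord (z @ a # s) (z @ b # t)"
  unfolding lex_less_def by blast

lemma lex_less_Cons_Cons_eq: "lex_less ord (x # p) (y # q) \<Longrightarrow> x = y"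
  by (auto simp: lex_less_def Cons_eq_append_conv)

lemma lex_less_Cons_same:
  "lex_less ord (x # p) (x # q) \<longleftrightarrow>
     lex_less ord p q \<or> (\<exists>a b p' q'. p = a # p' \<and> q = b # q' \<and> a \<noteq> b \<and> ord x a b)"
  (is "?lhs \<longleftrightarrow> ?rec \<or> ?split")
proof
  assume ?lhs
  then consider (prefix) r where "r \<noteq> []" "q = p @ r"
    | (diverge) z a b s t where "x # p = z @ a # s" "x # q = z @ b # t" "z \<noteq> []" "a \<noteq> b"
        "ord (last z) a b"
    unfolding lex_less_def by auto
  then show "?rec \<or> ?split"
  proof cases
    case diverge
    then obtain z' where "z = x # z'" by (cases z) auto
    with diverge show ?thesis
      by (cases "z' = []") (auto simp: lex_less_def)
  qed (simp add: lex_less_def)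
next
  assume "?rec \<or> ?split"
  then show ?lhs
  proof
    assume ?rec
    then show ?lhs
      unfolding lex_less_def by (auto 0 3 intro: exI[of _ "x # z" for z])
  next
    assume ?split
    then show ?lhs
      using lex_less_divergeI[of "[x]" _ _ ord] by auto
  qed
qed

lemma lex_less_trans:
  assumes trans: "\<And>u a b c. ord u a b \<Longrightarrow> ord u b c \<Longrightarrow> ord u a c"
    and irrefl: "\<And>u a. \<not> ord u a a"
  shows "lex_less ord p q \<Longrightarrow> lex_less ord q r \<Longrightarrow> lex_less ord p r"
proof (induction p arbitrary: q r)
  case Nil
  then show ?case by (cases r) auto
next
  case (Cons x p)
  obtain q' r' where qr: "q = x # q'" "r = x # r'"
    using Cons.prems lex_less_Cons_Cons_eq by (metis neq_Nil_conv not_lex_less_Nil)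
  let ?split = "\<lambda>p q. \<exists>a b p' q'. p = a # p' \<and> q = b # q' \<and> a \<noteq> b \<and> ord x a b"
  have "lex_less ord p q' \<or> ?split p q'" and "lex_less ord q' r' \<or> ?split q' r'"
    using Cons.prems unfolding qr lex_less_Cons_same by blast+
  then have "lex_less ord p r' \<or> ?split p r'"
  proof (elim disjE)
    assume "lex_less ord p q'" "lex_less ord q' r'"
    then show ?thesis using Cons.IH by blast
  next
    assume "lex_less ord p q'" "?split q' r'"
    then show ?thesis
      by (cases p) (auto dest: lex_less_Cons_Cons_eq)
  next
    assume "?split p q'" "lex_less ord q' r'"
    then show ?thesis
      by (cases r') (auto dest: lex_less_Cons_Cons_eq)
  next
    assume "?split p q'" "?split q' r'"
    then show ?thesis
      using trans irrefl by (metis list.inject)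
  qed
  then show ?case
    unfolding qr lex_less_Cons_same .
qed

lemma lex_less_total:
  assumes total: "\<And>u a b. E u a \<Longrightarrow> E u b \<Longrightarrow> a \<noteq> b \<Longrightarrow> ord u a b \<or> ord u b a"
  shows "is_path E p \<Longrightarrow> is_path E q \<Longrightarrow> hd p = hd q \<Longrightarrow> p \<noteq> q \<Longrightarrow>
    lex_less ord p q \<or> lex_less ord q p"
proof (induction p arbitrary: q)
  case (Cons x p)
  then obtain q' where q: "q = x # q'"
    by (cases q) (auto simp: is_path_iff_successively)
  show ?case
  proof (cases "p = [] \<or> q' = []")
    case True
    then show ?thesis
      using Cons.prems q by (auto simp: lex_less_Cons_same)
  next
    case False
    then obtain a b p' q'' where ab: "p = a # p'" "q' = b # q''"
      by (auto simp: neq_Nil_conv)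
    show ?thesis
    proof (cases "a = b")
      case True
      then have "lex_less ord p q' \<or> lex_less ord q' p"
        using Cons.IH[of q'] Cons.prems ab q by (auto simp: is_path_iff_successively)
      then show ?thesis
        unfolding q lex_less_Cons_same by blast
    next
      case False
      moreover have "E x a" "E x b"
        using Cons.prems ab q by (auto simp: is_path_iff_successively)
      ultimately show ?thesis
        using total[of x a b] ab unfolding q lex_less_Cons_same by blast
    qed
  qed
qed (simp add: is_path_iff_successively)

lemma lex_less_snoc:
  "lex_less ord p q \<Longrightarrow> \<not> prefix p q \<Longrightarrow> lex_less ord (p @ [x]) q"
  unfolding lex_less_def prefix_def by fastforce

lemma lex_less_restrict_iff:
  assumes "is_path G p" and "is_path G q"
  shows "lex_less (\<lambda>u a b. G u a \<and> G u b \<and> ord u a b) p q \<longleftrightarrow> lex_less ord p q"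
  using assms is_path_last_edge[of G] unfolding lex_less_def by blast

lemma lex_less_reroute:
  assumes lt: "lex_less ord q t" and "q \<noteq> []" and "last q = last t" and "distinct (t @ r)"
    and "is_path E (q @ r)" and "distinct q" and "r \<noteq> []"
  shows "\<exists>W. proper_path E (hd q) (last r) W \<and> lex_less ord W (t @ r)"
proof -
  from lt consider (prefix) s where "s \<noteq> []" "t = q @ s"
    | (diverge) z a b s1 s2 where "q = z @ a # s1" "t = z @ b # s2" "z \<noteq> []" "a \<noteq> b"
        "ord (last z) a b"
    unfolding lex_less_def by blast
  then show ?thesis
  proof cases
    case prefix
    then have "last q \<in> set q \<inter> set s"
      using \<open>q \<noteq> []\<close> \<open>last q = last t\<close> by (metis IntI last_appendR last_in_set)
    then show ?thesis
      using prefix \<open>distinct (t @ r)\<close> by auto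
  next
    case diverge
    let ?P = "\<lambda>x. x \<notin> set r"
    obtain u w where r: "r = u @ w" and "w \<noteq> []" and hd_w: "hd w = hd (dropWhile ?P q @ r)"
      and W: "is_path E (takeWhile ?P q @ w)" "distinct (takeWhile ?P q @ w)"
      using path_shortcut assms(4-7) by (metis distinct_append)
    have "set z \<inter> set r = {}"
      using \<open>distinct (t @ r)\<close> diverge(2) by auto
    then have take_q: "takeWhile ?P q = z @ takeWhile ?P (a # s1)"
      unfolding diverge(1) by (subst takeWhile_append2) auto
    obtain X where X: "takeWhile ?P q @ w = z @ a # X"
    proof (cases "a \<in> set r")
      case True
      then have "dropWhile ?P q = a # s1"
        using \<open>set z \<inter> set r = {}\<close> unfolding diverge(1) by (subst dropWhile_append2) auto
      then have "hd w = a"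
        using hd_w by simp
      then show ?thesis
        using that take_q True \<open>w \<noteq> []\<close> by (metis append.right_neutral list.collapse takeWhile.simps(2))
    qed (use that take_q in simp)
    have "proper_path E (hd q) (last r) (z @ a # X)"
      using W X r \<open>w \<noteq> []\<close> diverge(1,3) unfolding proper_path_def
      by (metis append_is_Nil_conv hd_append2 last_append)
    moreover have "lex_less ord (z @ a # X) (t @ r)"
      using diverge by (simp add: lex_less_divergeI)
    ultimately show ?thesis
      by blast
  qed
qed

section \<open>Least paths\<close>

locale connected_edge_ordered_graph =
  fixes V :: "'a set" and E :: "'a \<Rightarrow> 'a \<Rightarrow> bool" and ord :: "'a \<Rightarrow> 'a \<Rightarrow> 'a \<Rightarrow> bool"
    and v0 :: 'a
  assumes edge_ordered: "edge_ordered V E ord" and connected: "connected_from V E v0"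
begin

lemma finite_V: "finite V"
  and edge_in_V: "E u v \<Longrightarrow> u \<in> V \<and> v \<in> V"
  and ord_irrefl: "\<not> ord u a a"
  and ord_trans: "ord u a b \<Longrightarrow> ord u b c \<Longrightarrow> ord u a c"
  and ord_total: "E u a \<Longrightarrow> E u b \<Longrightarrow> a \<noteq> b \<Longrightarrow> ord u a b \<or> ord u b a"
  using edge_ordered unfolding edge_ordered_def by blast+

lemma root_in_V: "v0 \<in> V"
  and reachable: "v \<in> V \<Longrightarrow> E\<^sup>*\<^sup>* v0 v"
  using connected unfolding connected_from_def by blast+

lemma lex_trans: "lex_less ord p q \<Longrightarrow> lex_less ord q r \<Longrightarrow> lex_less ord p r"
  by (rule lex_less_trans[OF ord_trans ord_irrefl])

lemma lex_asym: "lex_less ord p q \<Longrightarrow> \<not> lex_less ord q p"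
  by (metis lex_trans lex_less_irrefl)

lemma proper_path_in_V: "proper_path E v0 v p \<Longrightarrow> set p \<subseteq> V"
  unfolding proper_path_def using is_path_vertex root_in_V edge_in_V by (metis subsetI)

lemma proper_path_exists: "v \<in> V \<Longrightarrow> \<exists>p. proper_path E v0 v p"
proof -
  assume "v \<in> V"
  then have "E\<^sup>*\<^sup>* v0 v"
    by (rule reachable)
  then show ?thesis
  proof (induction rule: rtranclp_induct)
    case base
    have "proper_path E v0 v0 [v0]"
      by (simp add: proper_path_def is_path_iff_successively)
    then show ?case ..
  next
    case (step y z)
    then obtain p where p: "proper_path E v0 y p"
      by blast
    show ?case
    proof (cases "z \<in> set p")
      case True
      then obtain u w where "p = u @ z # w"
        by (meson split_list)
      with p have "proper_path E v0 z (u @ [z])"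
        unfolding proper_path_def using is_path_appendD(1)[of E "u @ [z]" w] by (cases u) auto
      then show ?thesis ..
    next
      case False
      with p step(2) have "proper_path E v0 z (p @ [z])"
        by (auto simp: proper_path_def is_path_iff_successively successively_append_iff)
      then show ?thesis ..
    qed
  qed
qed

lemma finite_proper_paths: "finite {p. proper_path E v0 v p}"
proof (rule finite_subset)
  show "{p. proper_path E v0 v p} \<subseteq> {xs. set xs \<subseteq> V \<and> length xs \<le> card V}"
  proof
    fix p
    assume p: "p \<in> {p. proper_path E v0 v p}"
    then have "set p \<subseteq> V" and "distinct p"
      using proper_path_in_V by (auto simp: proper_path_def)
    then show "p \<in> {xs. set xs \<subseteq> V \<and> length xs \<le> card V}"
      using card_mono[OF finite_V, of "set p"] distinct_card[of p] by simp
  qed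
qed (rule finite_lists_length_le[OF finite_V])

abbreviation lp :: "'a \<Rightarrow> 'a list" where
  "lp \<equiv> min_path E ord v0"

lemma lp_least_path:
  assumes "v \<in> V"
  shows "proper_path E v0 v (lp v) \<and> (\<forall>q. proper_path E v0 v q \<longrightarrow> q \<noteq> lp v \<longrightarrow> lex_less ord (lp v) q)"
proof -
  let ?A = "{p. proper_path E v0 v p}"
  have "transp_on ?A (lex_less ord)"
    by (auto intro: transp_onI lex_trans)
  moreover have "totalp_on ?A (lex_less ord)"
    using lex_less_total[of E ord] ord_total by (auto simp: totalp_on_def proper_path_def)
  moreover have "?A \<noteq> {}"
    using proper_path_exists assms by blast
  ultimately obtain p where "p \<in> ?A" and "\<forall>q\<in>?A. q \<noteq> p \<longrightarrow> lex_less ord p q"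
    using Finite_Set.bex_least_element[OF finite_proper_paths] by blast
  then have "\<exists>p. proper_path E v0 v p \<and> (\<forall>q. proper_path E v0 v q \<longrightarrow> q \<noteq> p \<longrightarrow> lex_less ord p q)"
    by blast
  then show ?thesis
    unfolding min_path_def by (rule someI_ex)
qed

lemma lp_least: "v \<in> V \<Longrightarrow> proper_path E v0 v q \<Longrightarrow> q \<noteq> lp v \<Longrightarrow> lex_less ord (lp v) q"
  using lp_least_path by blast

context
  fixes v assumes v: "v \<in> V"
begin

lemma lp_path: "is_path E (lp v)"
  and lp_distinct: "distinct (lp v)"
  and lp_hd: "hd (lp v) = v0"
  and lp_last: "last (lp v) = v"
  using lp_least_path[OF v] unfolding proper_path_def by blast+

lemma lp_nonempty: "lp v \<noteq> []"
  using lp_path by (auto simp: is_path_def)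

lemma lp_in_V: "set (lp v) \<subseteq> V"
  using lp_least_path[OF v] proper_path_in_V by blast

end

lemma lp_root: "lp v0 = [v0]"
  using distinct_hd_eq_last[of "lp v0"] lp_distinct lp_nonempty lp_hd lp_last root_in_V by metis

lemma lp_inj: "u \<in> V \<Longrightarrow> v \<in> V \<Longrightarrow> lp u = lp v \<Longrightarrow> u = v"
  using lp_last by metis

lemma lp_prefix_closed:
  assumes "v \<in> V" and lp_v: "lp v = t @ r" and "t \<noteq> []"
  shows "lp (last t) = t"
proof (rule ccontr)
  let ?y = "last t"
  assume ne: "lp ?y \<noteq> t"
  have "?y \<in> V"
    using lp_in_V[OF \<open>v \<in> V\<close>] lp_v \<open>t \<noteq> []\<close> by auto
  have "proper_path E v0 ?y t"
    using lp_path[OF \<open>v \<in> V\<close>] lp_distinct[OF \<open>v \<in> V\<close>] lp_hd[OF \<open>v \<in> V\<close>] lp_v \<open>t \<noteq> []\<close>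
    unfolding proper_path_def by (auto dest: is_path_appendD)
  then have lt: "lex_less ord (lp ?y) t"
    using lp_least[OF \<open>?y \<in> V\<close>] ne[symmetric] by blast
  have "r \<noteq> []"
    using ne lp_v lp_last[OF \<open>v \<in> V\<close>] by auto
  have "is_path E (lp ?y @ r)"
    using lp_path[OF \<open>v \<in> V\<close>] lp_path[OF \<open>?y \<in> V\<close>] lp_last[OF \<open>?y \<in> V\<close>]
      lp_nonempty[OF \<open>?y \<in> V\<close>] lp_v \<open>t \<noteq> []\<close> \<open>r \<noteq> []\<close>
    by (auto simp: is_path_iff_successively successively_append_iff)
  moreover have "distinct (t @ r)"
    using lp_distinct[OF \<open>v \<in> V\<close>] lp_v by simp
  ultimately obtain W where "proper_path E (hd (lp ?y)) (last r) W" and "lex_less ord W (t @ r)"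
    using lex_less_reroute[OF lt lp_nonempty[OF \<open>?y \<in> V\<close>] lp_last[OF \<open>?y \<in> V\<close>]]
      lp_distinct[OF \<open>?y \<in> V\<close>] \<open>r \<noteq> []\<close>
    by blast
  moreover have "hd (lp ?y) = v0" and "last r = v"
    using lp_hd[OF \<open>?y \<in> V\<close>] lp_last[OF \<open>v \<in> V\<close>] lp_v \<open>r \<noteq> []\<close> by auto
  ultimately have "lex_less ord (lp v) W"
    using lp_least[OF \<open>v \<in> V\<close>, of W] lp_v by auto
  with \<open>lex_less ord W (t @ r)\<close> show False
    using lp_v lex_asym by simp
qed

lemma lp_prefix_of_vertex: "v \<in> V \<Longrightarrow> y \<in> set (lp v) \<Longrightarrow> prefix (lp y) (lp v)"
proof -
  assume "v \<in> V" "y \<in> set (lp v)"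
  then obtain u w where "lp v = (u @ [y]) @ w"
    by (metis append.assoc append_Cons append_Nil split_list)
  then show ?thesis
    using lp_prefix_closed[OF \<open>v \<in> V\<close>] by (metis prefixI last_snoc snoc_eq_iff_butlast)
qed

section \<open>The tree of least paths\<close>

abbreviation tree :: "'a \<Rightarrow> 'a \<Rightarrow> bool" where
  "tree \<equiv> Theta_E V E ord v0"

lemma lp_snoc_imp_tree:
  assumes "v \<in> V" and lp_v: "lp v = xs @ [u, v]"
  shows "tree u v"
proof -
  have "u \<in> V"
    using lp_in_V[OF \<open>v \<in> V\<close>] lp_v by auto
  moreover have "Suc (length xs) < length (lp v)" "lp v ! length xs = u" "lp v ! Suc (length xs) = v"
    using lp_v by (simp_all add: nth_append)
  ultimately show ?thesis
    unfolding Theta_E_def Let_def using \<open>v \<in> V\<close> by blast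
qed

lemma tree_iff: "tree u v \<longleftrightarrow> u \<in> V \<and> v \<in> V \<and> lp v = lp u @ [v]"
proof
  assume "tree u v"
  then obtain i where "u \<in> V" "v \<in> V" and i: "Suc i < length (lp v)" "lp v ! i = u" "lp v ! Suc i = v"
    unfolding Theta_E_def Let_def by blast
  then obtain xs ys where p: "lp v = xs @ u # v # ys"
    using split_list_nth_Suc by metis
  have "ys = []"
  proof (rule ccontr)
    assume "ys \<noteq> []"
    then have "v \<in> set ys"
      using lp_last[OF \<open>v \<in> V\<close>] p by (metis last_ConsR last_appendR last_in_set list.distinct(1))
    then show False
      using lp_distinct[OF \<open>v \<in> V\<close>] p by simp
  qed
  with p have "lp v = (xs @ [u]) @ [v]"
    by simp
  moreover from lp_prefix_closed[OF \<open>v \<in> V\<close> this] have "lp u = xs @ [u]"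
    by simp
  ultimately show "u \<in> V \<and> v \<in> V \<and> lp v = lp u @ [v]"
    using \<open>u \<in> V\<close> \<open>v \<in> V\<close> by simp
next
  assume uv: "u \<in> V \<and> v \<in> V \<and> lp v = lp u @ [v]"
  then have "lp u = butlast (lp u) @ [u]"
    using append_butlast_last_id[OF lp_nonempty] lp_last by metis
  with uv have "lp v = butlast (lp u) @ [u, v]"
    by (metis append.assoc append_Cons append_Nil)
  then show "tree u v"
    using lp_snoc_imp_tree uv by blast
qed

lemma tree_imp_edge: "tree a b \<Longrightarrow> E a b"
  using lp_path[of b] lp_nonempty[of a] lp_last[of a]
  by (auto simp: tree_iff is_path_iff_successively successively_append_iff)

lemma lp_tree_path:
  assumes "v \<in> V"
  shows "is_path tree (lp v)"
  unfolding is_path_def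
proof (intro conjI allI impI)
  show "lp v \<noteq> []"
    using lp_nonempty[OF assms] .
next
  fix i
  assume i: "Suc i < length (lp v)"
  let ?a = "lp v ! i" and ?b = "lp v ! Suc i"
  obtain xs ys where split: "lp v = (xs @ [?a, ?b]) @ ys"
    using split_list_nth_Suc[OF i] by auto
  have "?b \<in> V"
    using lp_in_V[OF assms] i by auto
  moreover have "lp ?b = xs @ [?a, ?b]"
    using lp_prefix_closed[OF assms split] by simp
  ultimately show "tree ?a ?b"
    by (rule lp_snoc_imp_tree)
qed

lemma tree_path_from_root:
  "is_path tree q \<Longrightarrow> hd q = v0 \<Longrightarrow> last q \<in> V \<and> lp (last q) = q"
proof (induction q rule: rev_induct)
  case (snoc x q)
  show ?case
  proof (cases "q = []")
    case True
    then show ?thesis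
      using snoc.prems lp_root root_in_V by simp
  next
    case False
    then have "is_path tree q" and "tree (last q) x"
      using snoc.prems(1) by (auto simp: is_path_iff_successively successively_append_iff)
    moreover have "hd q = v0"
      using snoc.prems(2) False by simp
    ultimately have "lp (last q) = q"
      using snoc.IH by blast
    with \<open>tree (last q) x\<close> show ?thesis
      using tree_iff by simp
  qed
qed (simp add: is_path_def)

lemma min_path_tree: "v \<in> V \<Longrightarrow> min_path tree R v0 v = lp v"
proof -
  assume "v \<in> V"
  have unique: "q = lp v" if "proper_path tree v0 v q" for q
    using that tree_path_from_root unfolding proper_path_def by metis
  have "proper_path tree v0 v (lp v)"
    using lp_tree_path lp_distinct lp_hd lp_last \<open>v \<in> V\<close> unfolding proper_path_def by blast
  then show ?thesis
    unfolding min_path_def[of tree R] using unique by (intro some_equality) blast+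
qed

lemma tree_tranclp_root_iff: "tree\<^sup>+\<^sup>+ v0 v \<longleftrightarrow> v \<in> V \<and> v \<noteq> v0"
proof
  assume "tree\<^sup>+\<^sup>+ v0 v"
  then obtain u where "tree u v"
    by (metis tranclp.cases)
  then have "v \<in> V" and "lp v = lp u @ [v]" and "lp u \<noteq> []"
    using tree_iff lp_nonempty by auto
  then show "v \<in> V \<and> v \<noteq> v0"
    using lp_root by auto
next
  assume v: "v \<in> V \<and> v \<noteq> v0"
  then obtain rest where rest: "lp v = v0 # rest"
    using lp_nonempty lp_hd by (metis list.collapse)
  with v have "rest \<noteq> []" and "last rest = v"
    using lp_last by (metis last.simps)+
  then show "tree\<^sup>+\<^sup>+ v0 v"
    using lp_tree_path[of v] v rest successively_imp_tranclp
    by (metis is_path_iff_successively)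
qed

lemma lex_tree_ord_iff:
  assumes "u \<in> V" and "v \<in> V"
  shows "lex_less (Theta_ord V E ord v0) (lp u) (lp v) \<longleftrightarrow> lex_less ord (lp u) (lp v)"
proof -
  have "Theta_ord V E ord v0 = (\<lambda>x a b. tree x a \<and> tree x b \<and> ord x a b)"
    by (intro ext) (simp add: Theta_ord_def)
  then show ?thesis
    using lex_less_restrict_iff[OF lp_tree_path[OF \<open>u \<in> V\<close>] lp_tree_path[OF \<open>v \<in> V\<close>], of ord]
    by simp
qed

end

section \<open>Lexicographic depth-first search\<close>

lemma finite_sorted_wrt_exists:
  assumes "finite A" and "transp_on A R" and "totalp_on A R"
  shows "\<exists>xs. set xs = A \<and> distinct xs \<and> sorted_wrt R xs"
  using assms
proof (induction A rule: finite_psubset_induct)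
  case (psubset A)
  show ?case
  proof (cases "A = {}")
    case False
    then obtain l where l: "l \<in> A" "\<forall>x\<in>A. x \<noteq> l \<longrightarrow> R l x"
      using Finite_Set.bex_least_element psubset.hyps psubset.prems by blast
    then have "A - {l} \<subset> A"
      by blast
    then obtain xs where "set xs = A - {l}" "distinct xs" "sorted_wrt R xs"
      using psubset.IH psubset.prems transp_on_subset totalp_on_subset by (metis Diff_subset)
    then show ?thesis
      using l by (intro exI[of _ "l # xs"]) auto
  qed simp
qed

lemma precedes_iff_sorted_wrt:
  assumes "distinct L" and "sorted_wrt R L" and asym: "\<And>x y. R x y \<Longrightarrow> \<not> R y x"
    and "u \<in> set L" and "v \<in> set L"
  shows "precedes L u v \<longleftrightarrow> R u v"
proof -
  obtain i j where ij: "i < length L" "L ! i = u" "j < length L" "L ! j = v"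
    using assms(4,5) by (auto simp: in_set_conv_nth)
  have "precedes L u v \<longleftrightarrow> i < j"
    using ij assms(1) unfolding precedes_def by (auto simp: nth_eq_iff_index_eq)
  also have "\<dots> \<longleftrightarrow> R u v"
    using ij assms(2) asym by (metis linorder_neqE_nat sorted_wrt_nth_less)
  finally show ?thesis .
qed

lemma dfs_run_deterministic: "dfs_run E ord L S L1 \<Longrightarrow> dfs_run E ord L S L2 \<Longrightarrow> L1 = L2"
proof (induction arbitrary: L2 rule: dfs_run.induct)
  case stop
  then show ?case by (cases rule: dfs_run.cases) auto
next
  case skip
  from skip.prems show ?case by (cases rule: dfs_run.cases) (auto simp: skip.hyps skip.IH)
next
  case visit
  from visit.prems show ?case by (cases rule: dfs_run.cases) (auto simp: visit.hyps visit.IH)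
qed

lemma dfs_run_prefix: "dfs_run E ord L S L' \<Longrightarrow> prefix L L'"
  by (induction rule: dfs_run.induct) (auto simp: prefix_def)

context connected_edge_ordered_graph
begin

lemma sorted_nbrs_spec:
  "set (sorted_nbrs E ord v L) = {w. E v w \<and> w \<notin> set L} \<and> distinct (sorted_nbrs E ord v L)
    \<and> sorted_wrt (ord v) (sorted_nbrs E ord v L)"
proof -
  let ?A = "{w. E v w \<and> w \<notin> set L}"
  have "finite ?A"
    using finite_V edge_in_V by (auto intro: finite_subset)
  moreover have "transp_on ?A (ord v)"
    using ord_trans by (auto intro: transp_onI)
  moreover have "totalp_on ?A (ord v)"
    using ord_total by (auto simp: totalp_on_def)
  ultimately have "\<exists>xs. set xs = ?A \<and> distinct xs \<and> sorted_wrt (ord v) xs"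
    by (rule finite_sorted_wrt_exists)
  then show ?thesis
    unfolding sorted_nbrs_def by (rule someI_ex)
qed

lemma dfs_run_exists: "set L \<subseteq> V \<Longrightarrow> distinct L \<Longrightarrow> set S \<subseteq> V \<Longrightarrow> \<exists>L'. dfs_run E ord L S L'"
proof (induction "card V - length L" arbitrary: L S rule: less_induct)
  case less
  from \<open>set S \<subseteq> V\<close> show ?case
  proof (induction S)
    case Nil
    then show ?case
      using dfs_run.stop by blast
  next
    case (Cons v S)
    show ?case
    proof (cases "v \<in> set L")
      case True
      then show ?thesis
        using Cons dfs_run.skip by (metis insert_subset list.simps(15))
    next
      case False
      let ?N = "sorted_nbrs E ord v (L @ [v])"
      have "v \<in> V"
        using Cons.prems by simp
      then have "card (set L) < card V"
        using less.prems(1) False finite_V by (metis psubset_card_mono psubsetI)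
      then have "card V - length (L @ [v]) < card V - length L"
        using distinct_card[OF less.prems(2)] by simp
      moreover have "set (L @ [v]) \<subseteq> V" and "distinct (L @ [v])"
        using less.prems \<open>v \<in> V\<close> False by auto
      moreover have "set (?N @ S) \<subseteq> V"
        using sorted_nbrs_spec edge_in_V Cons.prems by auto
      ultimately obtain L' where "dfs_run E ord (L @ [v]) (?N @ S) L'"
        using less.hyps by blast
      then show ?thesis
        using dfs_run.visit[OF False] by blast
    qed
  qed
qed

lemma tree_exit:
  assumes "v0 \<in> set L" and "w \<in> V" and "w \<notin> set L"
  shows "\<exists>a\<in>set L. \<exists>b. b \<notin> set L \<and> tree a b \<and> prefix (lp b) (lp w)"
proof -
  let ?P = "\<lambda>x. x \<in> set L"
  define t d where "t = takeWhile ?P (lp w)" and "d = dropWhile ?P (lp w)"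
  have lp_w: "lp w = t @ d"
    unfolding t_def d_def by simp
  have "t \<noteq> []"
    using assms(1) lp_hd[OF \<open>w \<in> V\<close>] lp_nonempty[OF \<open>w \<in> V\<close>] unfolding t_def
    by (metis list.collapse takeWhile.simps(2) list.distinct(1))
  have "d \<noteq> []"
    using assms(3) lp_last[OF \<open>w \<in> V\<close>] lp_nonempty[OF \<open>w \<in> V\<close>] unfolding d_def
    by (metis dropWhile_eq_Nil_conv last_in_set)
  then obtain b d' where d: "d = b # d'"
    by (meson neq_Nil_conv)
  have "b \<notin> set L"
    using hd_dropWhile[of ?P "lp w"] d unfolding d_def by simp
  have "b \<in> V"
    using lp_in_V[OF \<open>w \<in> V\<close>] lp_w d by auto
  have "last t \<in> set L"
    using \<open>t \<noteq> []\<close> unfolding t_def by (metis last_in_set set_takeWhileD)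
  moreover have "last t \<in> V"
    using lp_in_V[OF \<open>w \<in> V\<close>] lp_w \<open>t \<noteq> []\<close> by auto
  moreover have "lp w = (t @ [b]) @ d'"
    using lp_w d by simp
  moreover have "lp b = t @ [b]" and "lp (last t) = t"
    using lp_prefix_closed[OF \<open>w \<in> V\<close>] \<open>t \<noteq> []\<close> lp_w \<open>lp w = (t @ [b]) @ d'\<close>
    by (metis last_snoc snoc_eq_iff_butlast)+
  ultimately have "tree (last t) b" and "prefix (lp b) (lp w)"
    using tree_iff \<open>b \<in> V\<close> by (auto simp: prefix_def)
  then show ?thesis
    using \<open>last t \<in> set L\<close> \<open>b \<notin> set L\<close> by blast
qed

abbreviation lp_less :: "'a \<Rightarrow> 'a \<Rightarrow> bool" where
  "lp_less u v \<equiv> lex_less ord (lp u) (lp v)"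

definition child_paths :: "'a \<Rightarrow> 'a list \<Rightarrow> 'a list list" where
  "child_paths v L = map (\<lambda>n. lp v @ [n]) (sorted_nbrs E ord v L)"

lemma map_last_child_paths: "map last (child_paths v L) = sorted_nbrs E ord v L"
  by (simp add: child_paths_def comp_def)

lemma child_paths_sorted:
  assumes "v \<in> V"
  shows "sorted_wrt (lex_less ord) (child_paths v L)"
proof -
  have "lex_less ord (lp v @ [a]) (lp v @ [b])" if "ord v a b" for a b
  proof -
    have "a \<noteq> b"
      using that ord_irrefl by blast
    then show ?thesis
      using that lex_less_divergeI[OF lp_nonempty[OF assms], of a b ord "[]" "[]"] lp_last[OF assms]
      by simp
  qed
  moreover have "sorted_wrt (ord v) (sorted_nbrs E ord v L)"
    using sorted_nbrs_spec by blast
  ultimately show ?thesis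
    unfolding child_paths_def sorted_wrt_map
    by (rule sorted_wrt_mono_rel[of "sorted_nbrs E ord v L" "ord v"])
qed

lemma tree_child_in_child_paths:
  assumes "tree v b" and "b \<notin> set L"
  shows "lp b \<in> set (child_paths v L)"
proof -
  have "b \<in> set (sorted_nbrs E ord v L)"
    using tree_imp_edge[OF assms(1)] assms(2) sorted_nbrs_spec by blast
  moreover have "lp b = lp v @ [b]"
    using assms(1) tree_iff by blast
  ultimately show ?thesis
    unfolding child_paths_def by simp
qed

lemma child_paths_edge:
  assumes "c \<in> set (child_paths v L)"
  shows "\<exists>b. E v b \<and> c = lp v @ [b]"
proof -
  obtain b where "b \<in> set (sorted_nbrs E ord v L)" and "c = lp v @ [b]"
    using assms unfolding child_paths_def by auto
  then show ?thesis
    using sorted_nbrs_spec by blast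
qed

text \<open>The stack \<open>S\<close> is represented by paths \<open>cs\<close> with \<open>S = map last cs\<close>: an entry \<open>b\<close>
  pushed while visiting \<open>a\<close> is recorded as \<open>lp a @ [b]\<close>.\<close>

definition dfs_inv :: "'a list \<Rightarrow> 'a list list \<Rightarrow> bool" where
  "dfs_inv L cs \<longleftrightarrow> v0 \<in> set L \<and> distinct L \<and> set L \<subseteq> V \<and> sorted_wrt lp_less L
     \<and> (\<forall>u\<in>set L. \<forall>w\<in>V - set L. lp_less u w)
     \<and> (\<forall>c\<in>set cs. \<exists>a\<in>set L. \<exists>b. E a b \<and> c = lp a @ [b])
     \<and> sorted_wrt (lex_less ord) cs
     \<and> (\<forall>a\<in>set L. \<forall>b. b \<notin> set L \<longrightarrow> tree a b \<longrightarrow> lp b \<in> set cs)"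

lemma dfs_inv_candidate:
  "dfs_inv L cs \<Longrightarrow> c \<in> set cs \<Longrightarrow> \<exists>a\<in>set L. \<exists>b. E a b \<and> c = lp a @ [b]"
  unfolding dfs_inv_def by blast

lemma visited_lp_closed:
  assumes inv: "dfs_inv L cs" and "a \<in> set L"
  shows "set (lp a) \<subseteq> set L"
proof
  fix y
  assume y: "y \<in> set (lp a)"
  show "y \<in> set L"
  proof (rule ccontr)
    assume "y \<notin> set L"
    have "a \<in> V"
      using inv \<open>a \<in> set L\<close> unfolding dfs_inv_def by blast
    then have "y \<in> V"
      using lp_in_V y by blast
    with \<open>y \<notin> set L\<close> have "lp_less a y"
      using inv \<open>a \<in> set L\<close> unfolding dfs_inv_def by blast
    moreover have "lp y = lp a \<or> lex_less ord (lp y) (lp a)"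
      using lp_prefix_of_vertex[OF \<open>a \<in> V\<close> y] prefix_imp_lex_less by blast
    ultimately show False
      using lex_asym by auto
  qed
qed

lemma dfs_inv_init: "dfs_inv [v0] (child_paths v0 [v0])"
  unfolding dfs_inv_def
proof (intro conjI ballI allI impI)
  fix u w
  assume "u \<in> set [v0]" and "w \<in> V - set [v0]"
  then have "u = v0" and "w \<in> V" and "w \<noteq> v0"
    by auto
  then have "prefix (lp u) (lp w)"
    using lp_prefix_of_vertex lp_hd lp_nonempty by (metis hd_in_set)
  moreover have "lp u \<noteq> lp w"
    using lp_inj root_in_V \<open>u = v0\<close> \<open>w \<in> V\<close> \<open>w \<noteq> v0\<close> by metis
  ultimately show "lp_less u w"
    by (rule prefix_imp_lex_less)
next
  fix c
  assume "c \<in> set (child_paths v0 [v0])"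
  then show "\<exists>a\<in>set [v0]. \<exists>b. E a b \<and> c = lp a @ [b]"
    using child_paths_edge by simp
next
  fix a b
  assume "a \<in> set [v0]" "b \<notin> set [v0]" "tree a b"
  then show "lp b \<in> set (child_paths v0 [v0])"
    using tree_child_in_child_paths by simp
qed (simp_all add: root_in_V child_paths_sorted)

lemma dfs_inv_stop:
  assumes inv: "dfs_inv L []"
  shows "set L = V"
proof -
  have "w \<in> set L" if "w \<in> V" for w
  proof (rule ccontr)
    assume "w \<notin> set L"
    moreover have "v0 \<in> set L"
      using inv unfolding dfs_inv_def by blast
    ultimately obtain a b where "a \<in> set L" "b \<notin> set L" "tree a b"
      using tree_exit \<open>w \<in> V\<close> by blast
    then have "lp b \<in> set []"
      using inv unfolding dfs_inv_def by blast
    then show False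
      by simp
  qed
  then show ?thesis
    using inv unfolding dfs_inv_def by blast
qed

lemma dfs_inv_skip:
  assumes inv: "dfs_inv L (c # cs)" and "last c \<in> set L"
  shows "dfs_inv L cs"
proof -
  have "lp b \<in> set cs" if "a \<in> set L" "b \<notin> set L" "tree a b" for a b
  proof -
    have "lp b \<in> set (c # cs)"
      using inv that unfolding dfs_inv_def by blast
    moreover have "last (lp b) = b"
      using lp_last that(3) tree_iff by blast
    ultimately show ?thesis
      using that(2) \<open>last c \<in> set L\<close> by auto
  qed
  then show ?thesis
    using inv unfolding dfs_inv_def by simp
qed

lemma dfs_inv_head_le:
  assumes inv: "dfs_inv L (c # cs)" and "w \<in> V" and "w \<notin> set L"
  shows "c = lp w \<or> lex_less ord c (lp w)"
proof -
  have "v0 \<in> set L"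
    using inv unfolding dfs_inv_def by blast
  then obtain a b where "a \<in> set L" "b \<notin> set L" "tree a b" and "prefix (lp b) (lp w)"
    using tree_exit \<open>w \<in> V\<close> \<open>w \<notin> set L\<close> by blast
  then have "lp b \<in> set (c # cs)"
    using inv unfolding dfs_inv_def by blast
  then have "c = lp b \<or> lex_less ord c (lp b)"
    using inv unfolding dfs_inv_def by auto
  moreover have "lp b = lp w \<or> lex_less ord (lp b) (lp w)"
    using \<open>prefix (lp b) (lp w)\<close> prefix_imp_lex_less by blast
  ultimately show ?thesis
    by (auto intro: lex_trans)
qed

lemma dfs_inv_pop:
  assumes inv: "dfs_inv L (c # cs)" and "last c \<notin> set L"
  shows "last c \<in> V \<and> lp (last c) = c"
proof -
  obtain a b where "a \<in> set L" and "E a b" and c: "c = lp a @ [b]"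
    using dfs_inv_candidate[OF inv list.set_intros(1)] by blast
  then have "a \<in> V" and "b \<in> V" and "last c = b"
    using edge_in_V by auto
  have "b \<notin> set (lp a)"
    using visited_lp_closed[OF inv \<open>a \<in> set L\<close>] \<open>last c \<notin> set L\<close> \<open>last c = b\<close> by blast
  then have "proper_path E v0 b c"
    using lp_path[OF \<open>a \<in> V\<close>] lp_distinct[OF \<open>a \<in> V\<close>] lp_hd[OF \<open>a \<in> V\<close>] lp_last[OF \<open>a \<in> V\<close>]
      lp_nonempty[OF \<open>a \<in> V\<close>] \<open>E a b\<close>
    unfolding c proper_path_def by (simp add: is_path_iff_successively successively_append_iff)
  then have "lp b = c \<or> lex_less ord (lp b) c"
    using lp_least[OF \<open>b \<in> V\<close>] by blast
  moreover have "c = lp b \<or> lex_less ord c (lp b)"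
    using dfs_inv_head_le[OF inv \<open>b \<in> V\<close>] \<open>last c \<notin> set L\<close> \<open>last c = b\<close> by blast
  ultimately have "lp b = c"
    using lex_asym by blast
  then show ?thesis
    using \<open>b \<in> V\<close> \<open>last c = b\<close> by simp
qed

lemma dfs_inv_pop_least:
  assumes inv: "dfs_inv L (c # cs)" and "last c \<notin> set L"
    and "w \<in> V" and "w \<notin> set L" and "w \<noteq> last c"
  shows "lp_less (last c) w"
proof -
  have "last c \<in> V" and lp_c: "lp (last c) = c"
    using dfs_inv_pop[OF inv \<open>last c \<notin> set L\<close>] by auto
  moreover have "c \<noteq> lp w"
    using lp_inj[OF \<open>last c \<in> V\<close> \<open>w \<in> V\<close>] lp_c \<open>w \<noteq> last c\<close> by auto
  ultimately show ?thesis
    using dfs_inv_head_le[OF inv \<open>w \<in> V\<close> \<open>w \<notin> set L\<close>] by simp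
qed

lemma dfs_inv_pop_precedes_stack:
  assumes inv: "dfs_inv L (c # cs)" and "last c \<notin> set L" and "c' \<in> set cs"
  shows "lex_less ord (lp (last c) @ [n]) c'"
proof -
  have "last c \<in> V" and lp_c: "lp (last c) = c"
    using dfs_inv_pop[OF inv \<open>last c \<notin> set L\<close>] by auto
  have "lex_less ord c c'"
    using inv \<open>c' \<in> set cs\<close> unfolding dfs_inv_def by simp
  obtain a' b' where "a' \<in> set L" and c': "c' = lp a' @ [b']"
    using dfs_inv_candidate[OF inv list.set_intros(2)[OF \<open>c' \<in> set cs\<close>]] by blast
  have "\<not> prefix c c'"
  proof
    assume "prefix c c'"
    moreover have "c \<noteq> c'"
      using \<open>lex_less ord c c'\<close> by auto
    ultimately have "prefix c (lp a')"
      unfolding c' by (simp add: prefix_snoc)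
    moreover have "last c \<in> set c"
      using lp_nonempty[OF \<open>last c \<in> V\<close>] lp_c by (metis last_in_set)
    ultimately have "last c \<in> set L"
      using visited_lp_closed[OF inv \<open>a' \<in> set L\<close>] set_mono_prefix by blast
    with \<open>last c \<notin> set L\<close> show False ..
  qed
  then show ?thesis
    using lex_less_snoc[OF \<open>lex_less ord c c'\<close>] lp_c by simp
qed

lemma dfs_inv_visit_tree_edge:
  assumes inv: "dfs_inv L (c # cs)"
    and "a \<in> set (L @ [last c])" and "b \<notin> set (L @ [last c])" and "tree a b"
  shows "lp b \<in> set (child_paths (last c) (L @ [last c]) @ cs)"
proof (cases "a = last c")
  case True
  then show ?thesis
    using tree_child_in_child_paths assms(3,4) by simp
next
  case False
  then have "lp b \<in> set (c # cs)"
    using inv assms(2-4) unfolding dfs_inv_def by simp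
  moreover have "last (lp b) = b"
    using lp_last \<open>tree a b\<close> tree_iff by blast
  ultimately show ?thesis
    using assms(3) by auto
qed

lemma dfs_inv_visit:
  assumes inv: "dfs_inv L (c # cs)" and v: "last c \<notin> set L"
  shows "dfs_inv (L @ [last c]) (child_paths (last c) (L @ [last c]) @ cs)"
proof -
  let ?v = "last c" and ?L = "L @ [last c]"
  let ?cs = "child_paths ?v ?L @ cs"
  have "?v \<in> V"
    using dfs_inv_pop[OF inv v] by blast
  have sep: "\<forall>u\<in>set L. \<forall>w\<in>V - set L. lp_less u w"
    using inv unfolding dfs_inv_def by blast
  have "v0 \<in> set ?L" and "distinct ?L" and "set ?L \<subseteq> V"
    using inv v \<open>?v \<in> V\<close> unfolding dfs_inv_def by auto
  moreover have "sorted_wrt lp_less ?L"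
    using inv sep v \<open>?v \<in> V\<close> unfolding dfs_inv_def by (simp add: sorted_wrt_append)
  moreover have "\<forall>u\<in>set ?L. \<forall>w\<in>V - set ?L. lp_less u w"
    using sep dfs_inv_pop_least[OF inv v] by auto
  moreover have "\<forall>c'\<in>set ?cs. \<exists>a\<in>set ?L. \<exists>b. E a b \<and> c' = lp a @ [b]"
    using child_paths_edge dfs_inv_candidate[OF inv] by fastforce
  moreover have "sorted_wrt (lex_less ord) ?cs"
    using child_paths_sorted[OF \<open>?v \<in> V\<close>] inv child_paths_edge
      dfs_inv_pop_precedes_stack[OF inv v]
    unfolding dfs_inv_def sorted_wrt_append by fastforce
  moreover have "\<forall>a\<in>set ?L. \<forall>b. b \<notin> set ?L \<longrightarrow> tree a b \<longrightarrow> lp b \<in> set ?cs"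
    using dfs_inv_visit_tree_edge[OF inv] by blast
  ultimately show ?thesis
    unfolding dfs_inv_def by blast
qed

lemma dfs_run_inv:
  "dfs_run E ord L S L' \<Longrightarrow> S = map last cs \<Longrightarrow> dfs_inv L cs \<Longrightarrow>
    distinct L' \<and> set L' = V \<and> sorted_wrt lp_less L'"
proof (induction arbitrary: cs rule: dfs_run.induct)
  case (stop L)
  then show ?case
    using dfs_inv_stop unfolding dfs_inv_def by simp
next
  case (skip v L S L')
  then obtain c cs' where "cs = c # cs'" "last c = v" "S = map last cs'"
    by (cases cs) auto
  then show ?case
    using skip.IH dfs_inv_skip skip.hyps(1) skip.prems(2) by blast
next
  case (visit v L S L')
  then obtain c cs' where cs: "cs = c # cs'" "last c = v" "S = map last cs'"
    by (cases cs) auto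
  then have "sorted_nbrs E ord v (L @ [v]) @ S = map last (child_paths v (L @ [v]) @ cs')"
    by (simp add: map_last_child_paths)
  then show ?case
    using visit.IH dfs_inv_visit visit.hyps(1) visit.prems(2) cs by blast
qed

lemma dfs_traversal:
  defines "L \<equiv> dfs_traversal E ord v0"
  shows "dfs_run E ord [] [v0] L \<and> distinct L \<and> set L = V \<and> hd L = v0 \<and> sorted_wrt lp_less L"
proof -
  obtain L' where run: "dfs_run E ord [] [v0] L'"
    using dfs_run_exists[of "[]" "[v0]"] root_in_V by auto
  then have "L = L'"
    unfolding L_def dfs_traversal_def using dfs_run_deterministic by blast
  from run have run': "dfs_run E ord [v0] (sorted_nbrs E ord v0 [v0]) L'"
    by (cases rule: dfs_run.cases) auto
  then have "distinct L' \<and> set L' = V \<and> sorted_wrt lp_less L'"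
    using dfs_run_inv[OF _ map_last_child_paths[symmetric] dfs_inv_init] by blast
  moreover have "hd L' = v0"
    using dfs_run_prefix[OF run'] by (auto simp: prefix_def)
  ultimately show ?thesis
    using run \<open>L = L'\<close> by blast
qed

end

theorem lemma9p1:
  fixes V :: "'a set" and E :: "'a \<Rightarrow> 'a \<Rightarrow> bool" and ord :: "'a \<Rightarrow> 'a \<Rightarrow> 'a \<Rightarrow> bool" and v0 :: 'a
  assumes "edge_ordered V E ord"
    and "connected_from V E v0"
  defines "TE \<equiv> F_E (Theta_E V E ord v0)"
    and "Tord \<equiv> F_ord (Theta_E V E ord v0) (Theta_ord V E ord v0)"
    and "L \<equiv> dfs_traversal E ord v0"
  shows "dfs_run E ord [] [v0] L \<and> distinct L \<and> set L = V \<and> hd L = v0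
     \<and> {v. TE v0 v} = V - {v0}
     \<and> (\<forall>u v. TE v0 u \<longrightarrow> TE v0 v \<longrightarrow>
            (Tord v0 u v \<longleftrightarrow> precedes L u v))"
proof -
  interpret connected_edge_ordered_graph V E ord v0
    using assms(1,2) by unfold_locales
  have L: "dfs_run E ord [] [v0] L \<and> distinct L \<and> set L = V \<and> hd L = v0 \<and> sorted_wrt lp_less L"
    unfolding L_def by (rule dfs_traversal)
  have TE: "TE v0 v \<longleftrightarrow> v \<in> V \<and> v \<noteq> v0" for v
    unfolding TE_def F_E_def by (rule tree_tranclp_root_iff)
  have "Tord v0 u v \<longleftrightarrow> precedes L u v" if "TE v0 u" and "TE v0 v" for u v
  proof -
    have "u \<in> V" and "v \<in> V"
      using that TE by auto
    have "Tord v0 u v \<longleftrightarrow> lp_less u v"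
      using that lex_tree_ord_iff[OF \<open>u \<in> V\<close> \<open>v \<in> V\<close>]
      unfolding Tord_def F_ord_def TE_def F_E_def min_path_tree[OF \<open>u \<in> V\<close>] min_path_tree[OF \<open>v \<in> V\<close>]
      by blast
    also have "\<dots> \<longleftrightarrow> precedes L u v"
      using precedes_iff_sorted_wrt[of L lp_less u v] L lex_asym \<open>u \<in> V\<close> \<open>v \<in> V\<close> by blast
    finally show ?thesis .
  qed
  with L TE show ?thesis
    by auto
qed

end
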